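(* Let $E$ be a regular biordered set satisfying (E1), (E2), (E3) below. Then for all $e,f\in E$ with $f\,\omega\,e'$, in the lattice $L(E)=E/\mathcal L$ we have $\mathcal L(e)\vee\mathcal L(f)=\mathcal L(e\oplus f)$ and $\mathcal L(e)\wedge\mathcal L(f)=\mathcal L(0)=\{0\}$. Conditions: (E1) there exists $0\in E$ with $0\,\omega\,x$ for every $x\in E$; (E2) there is a map $x\mapsto x'$ on $E$ such that for all $x,y\in E$: $(x')'=x$; $y\,\omega^l\,x$ iff $x'\,\omega^r\,y'$; $y\,\omega^l\,x'$ iff $M(y,x)=\{0\}$; (E3) for all $x,y\in E$, if $y\,\omega\,x'$ then $S(x',y')\cap S(y',x')\ne\emptyset$.
   Context: A regular biordered set is a partial algebra isomorphic to the set of idempotents $E(S)$ of a regular semigroup $S$ (regular: every $x$ has $y$ with $xyx=x$), where $ef$ (computed in $S$) is defined when $\{ef,fe\}\cap\{e,f\}\ne\emptyset$. In $E$: $\omega^l=\{(e,f): ef=e\}$, $\omega^r=\{(e,f): fe=e\}$, $\omega=\omega^l\cap\omega^r$; $M(e,f)=\{g\in E: g\,\omega^l\,e,\ g\,\omega^r\,f\}$; for $g,h\in M(e,f)$, $g\preceq h$ iff $eg\,\omega^r\,eh$ and $gf\,\omega^l\,hf$; $S(e,f)=\{h\in M(e,f): g\preceq h\text{ for all }g\in M(e,f)\}$. Under (E1)–(E3), for $f\,\omega\,e'$ the set $S(e',f')\cap S(f',e')$ has exactly one element $k$, and $e\oplus f:=k'$. $\mathcal L=\omega^l\cap(\omega^l)^{-1}$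 with classes $\mathcal L(e)$; $E/\mathcal L$ is ordered by $\mathcal L(e)\le\mathcal L(f)$ iff $e\,\omega^l\,f$ (a lattice under (E1),(E2)). *)

theory Defs
  imports Main
begin

text \<open>A regular biordered set is (up to isomorphism) the set of idempotents E(S) of a
regular semigroup S, with the partial product inherited from S.\<close>

definition regular_semigroup :: "('a::semigroup_mult) itself \<Rightarrow> bool" where
  "regular_semigroup _ \<longleftrightarrow> (\<forall>x::'a. \<exists>y. x * y * x = x)"

definition Idem :: "('a::semigroup_mult) set" where
  "Idem = {e. e * e = e}"

definition omega_l :: "'a::semigroup_mult \<Rightarrow> 'a \<Rightarrow> bool" where
  "omega_l e f \<longleftrightarrow> e * f = e"

definition omega_r :: "'a::semigroup_mult \<Rightarrow> 'a \<Rightarrow> bool" where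
  "omega_r e f \<longleftrightarrow> f * e = e"

definition omega :: "'a::semigroup_mult \<Rightarrow> 'a \<Rightarrow> bool" where
  "omega e f \<longleftrightarrow> omega_l e f \<and> omega_r e f"

definition Mset :: "'a::semigroup_mult \<Rightarrow> 'a \<Rightarrow> 'a set" where
  "Mset e f = {g \<in> Idem. omega_l g e \<and> omega_r g f}"

definition preceq :: "'a::semigroup_mult \<Rightarrow> 'a \<Rightarrow> 'a \<Rightarrow> 'a \<Rightarrow> bool" where
  "preceq e f g h \<longleftrightarrow> omega_r (e * g) (e * h) \<and> omega_l (g * f) (h * f)"

definition Sset :: "'a::semigroup_mult \<Rightarrow> 'a \<Rightarrow> 'a set" where
  "Sset e f = {h \<in> Mset e f. \<forall>g \<in> Mset e f. preceq e f g h}"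

definition E1 :: "'a::semigroup_mult \<Rightarrow> bool" where
  "E1 z \<longleftrightarrow> z \<in> Idem \<and> (\<forall>x \<in> Idem. omega z x)"

definition E2 :: "'a::semigroup_mult \<Rightarrow> ('a \<Rightarrow> 'a) \<Rightarrow> bool" where
  "E2 z c \<longleftrightarrow> (\<forall>x \<in> Idem. c x \<in> Idem) \<and>
     (\<forall>x \<in> Idem. \<forall>y \<in> Idem.
        c (c x) = x \<and>
        (omega_l y x \<longleftrightarrow> omega_r (c x) (c y)) \<and>
        (omega_l y (c x) \<longleftrightarrow> Mset y x = {z}))"

definition E3 :: "('a::semigroup_mult \<Rightarrow> 'a) \<Rightarrow> bool" where
  "E3 c \<longleftrightarrow> (\<forall>x \<in> Idem. \<forall>y \<in> Idem.
      omega y (c x) \<longrightarrow> Sset (c x) (c y) \<inter> Sset (c y) (c x) \<noteq> {})"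

definition oplus :: "('a::semigroup_mult \<Rightarrow> 'a) \<Rightarrow> 'a \<Rightarrow> 'a \<Rightarrow> 'a" where
  "oplus c e f = c (THE k. k \<in> Sset (c e) (c f) \<inter> Sset (c f) (c e))"

definition Lrel :: "'a::semigroup_mult \<Rightarrow> 'a \<Rightarrow> bool" where
  "Lrel e f \<longleftrightarrow> omega_l e f \<and> omega_l f e"

definition Lclass :: "'a::semigroup_mult \<Rightarrow> 'a set" where
  "Lclass e = {g \<in> Idem. Lrel g e}"

definition LE :: "('a::semigroup_mult) set set" where
  "LE = Lclass ` Idem"

text \<open>Order on E/L: L(e) \<le> L(f) iff e omega_l f (well defined on classes).\<close>
definition Lle :: "('a::semigroup_mult) set \<Rightarrow> 'a set \<Rightarrow> bool" where
  "Lle A B \<longleftrightarrow> (\<exists>a \<in> A. \<exists>b \<in> B. a \<in> Idem \<and> b \<in> Idem \<and> omega_l a b)"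

definition is_join :: "('a::semigroup_mult) set \<Rightarrow> 'a set \<Rightarrow> 'a set \<Rightarrow> bool" where
  "is_join A B J \<longleftrightarrow> J \<in> LE \<and> Lle A J \<and> Lle B J \<and>
     (\<forall>C \<in> LE. Lle A C \<and> Lle B C \<longrightarrow> Lle J C)"

definition is_meet :: "('a::semigroup_mult) set \<Rightarrow> 'a set \<Rightarrow> 'a set \<Rightarrow> bool" where
  "is_meet A B J \<longleftrightarrow> J \<in> LE \<and> Lle J A \<and> Lle J B \<and>
     (\<forall>C \<in> LE. Lle C A \<and> Lle C B \<longrightarrow> Lle C J)"

end

theory Submission
  imports Defs
begin

(*
  Since L(e) <= L(f) iff omega_l e f, join and meet reduce to statements about omega_l
  on idempotents.  A common omega_l-lower bound a of e and f satisfies omega_l a e',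
  so M(a,e) = {0} by (E2); as e a lies in M(a,e), a = a e a = a 0 = 0.
  For the join, the complement map turns omega_l into reversed omega_r, and the element
  k of S(e',f') \<inter> S(f',e') given by (E3) is the greatest common omega_r-lower bound of
  e' and f': for any such bound x, the element x e' lies in M(e',f'), and comparing it
  with k gives omega_r x k.  Complementing back, k' = e \<oplus> f is the least common
  omega_l-upper bound of e and f.
*)

lemma omega_l_trans: "omega_l a b \<Longrightarrow> omega_l b c \<Longrightarrow> omega_l a c"
  unfolding omega_l_def by (metis mult.assoc)

lemma omega_l_refl: "a \<in> Idem \<Longrightarrow> omega_l a a"
  by (simp add: omega_l_def Idem_def)

lemma Lclass_self: "e \<in> Idem \<Longrightarrow> e \<in> Lclass e"
  by (simp add: Lclass_def Lrel_def omega_l_refl)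

lemma Lle_Lclass_iff:
  assumes "e \<in> Idem" and "f \<in> Idem"
  shows "Lle (Lclass e) (Lclass f) \<longleftrightarrow> omega_l e f"
proof
  assume "Lle (Lclass e) (Lclass f)"
  then obtain a b where "a \<in> Lclass e" "b \<in> Lclass f" "omega_l a b"
    by (auto simp: Lle_def)
  then have "omega_l e a" "omega_l a b" "omega_l b f"
    by (auto simp: Lclass_def Lrel_def)
  then show "omega_l e f" by (blast intro: omega_l_trans)
next
  assume "omega_l e f"
  then show "Lle (Lclass e) (Lclass f)"
    using assms by (auto simp: Lle_def intro: Lclass_self)
qed

lemma is_join_Lclass_iff:
  assumes "e \<in> Idem" and "f \<in> Idem" and "j \<in> Idem"
  shows "is_join (Lclass e) (Lclass f) (Lclass j) \<longleftrightarrow>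
    omega_l e j \<and> omega_l f j \<and> (\<forall>h \<in> Idem. omega_l e h \<and> omega_l f h \<longrightarrow> omega_l j h)"
  using assms by (auto simp: is_join_def LE_def Lle_Lclass_iff)

lemma is_meet_Lclass_iff:
  assumes "e \<in> Idem" and "f \<in> Idem" and "m \<in> Idem"
  shows "is_meet (Lclass e) (Lclass f) (Lclass m) \<longleftrightarrow>
    omega_l m e \<and> omega_l m f \<and> (\<forall>h \<in> Idem. omega_l h e \<and> omega_l h f \<longrightarrow> omega_l h m)"
  using assms by (auto simp: is_meet_def LE_def Lle_Lclass_iff)

lemma Sset_inter_unique:
  assumes "k \<in> Sset a b \<inter> Sset b a" and "k' \<in> Sset a b \<inter> Sset b a"
  shows "k' = k"
proof -
  have "a * k = k" "k * b = k" "a * k' = k'" "k' * b = k'"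
    using assms by (auto simp: Sset_def Mset_def omega_l_def omega_r_def)
  moreover have "preceq a b k' k" and "preceq a b k k'"
    using assms by (auto simp: Sset_def)
  ultimately have "k * k' = k'" "k' * k = k'" "k' * k = k"
    by (simp_all add: preceq_def omega_l_def omega_r_def)
  then show ?thesis by simp
qed

lemma oplus_eq:
  assumes "k \<in> Sset (c e) (c f) \<inter> Sset (c f) (c e)"
  shows "oplus c e f = c k"
  unfolding oplus_def using assms by (metis Sset_inter_unique the_equality)

lemma Sset_omega_r_greatest:
  assumes "x \<in> Idem" and "a \<in> Idem"
    and "omega_r x a" and "omega_r x b"
    and "k \<in> Sset a b" and "omega_r k a"
  shows "omega_r x k"
proof -
  have xx: "x * x = x" and aa: "a * a = a" and ax: "a * x = x" and bx: "b * x = x"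
    and ak: "a * k = k"
    using assms by (simp_all add: Idem_def omega_r_def)
  define g where "g = x * a"
  have "g * g = g"
    unfolding g_def by (metis ax xx mult.assoc)
  moreover have "g * a = g"
    unfolding g_def by (simp add: aa mult.assoc)
  moreover have "b * g = g"
    unfolding g_def by (simp add: bx flip: mult.assoc)
  ultimately have "g \<in> Mset a b"
    by (simp add: Mset_def Idem_def omega_l_def omega_r_def)
  then have "preceq a b g k"
    using assms(5) by (simp add: Sset_def)
  moreover have "a * g = g"
    unfolding g_def by (simp add: ax flip: mult.assoc)
  ultimately have kg: "k * g = g"
    by (simp add: preceq_def omega_r_def ak mult.assoc)
  have "g * x = x"
    unfolding g_def by (simp add: ax xx mult.assoc)
  then have "k * x = x"
    using kg by (metis mult.assoc)
  then show ?thesis by (simp add: omega_r_def)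
qed

lemma E1_Lclass_zero:
  assumes "E1 z"
  shows "Lclass z = {z}"
  using assms by (auto simp: E1_def omega_def omega_l_def omega_r_def Lclass_def Lrel_def)

lemma E1_omega_l_zero: "E1 z \<Longrightarrow> x \<in> Idem \<Longrightarrow> omega_l z x"
  by (simp add: E1_def omega_def)

lemma E2_complement_Idem: "E2 z c \<Longrightarrow> x \<in> Idem \<Longrightarrow> c x \<in> Idem"
  by (simp add: E2_def)

lemma E2_complement_complement: "E2 z c \<Longrightarrow> x \<in> Idem \<Longrightarrow> c (c x) = x"
  by (simp add: E2_def)

lemma E2_omega_l_iff:
  "E2 z c \<Longrightarrow> x \<in> Idem \<Longrightarrow> y \<in> Idem \<Longrightarrow> omega_l y x \<longleftrightarrow> omega_r (c x) (c y)"
  by (simp add: E2_def)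

lemma E2_omega_l_complement_iff:
  "E2 z c \<Longrightarrow> x \<in> Idem \<Longrightarrow> y \<in> Idem \<Longrightarrow> omega_l y (c x) \<longleftrightarrow> Mset y x = {z}"
  unfolding E2_def by blast

lemma omega_l_complement_eq_zero:
  assumes "E1 z" and "E2 z c" and "a \<in> Idem" and "e \<in> Idem"
    and "omega_l a e" and "omega_l a (c e)"
  shows "a = z"
proof -
  have aa: "a * a = a" and ee: "e * e = e" and ae: "a * e = a"
    using assms by (simp_all add: Idem_def omega_l_def)
  have "e * a * (e * a) = e * a"
    by (metis aa ae mult.assoc)
  moreover have "e * a * a = e * a"
    by (simp add: aa mult.assoc)
  moreover have "e * (e * a) = e * a"
    by (simp add: ee flip: mult.assoc)
  ultimately have "e * a \<in> Mset a e"
    by (simp add: Mset_def Idem_def omega_l_def omega_r_def)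
  moreover have "Mset a e = {z}"
    using assms by (simp add: E2_omega_l_complement_iff)
  ultimately have "e * a = z" by simp
  then have "a = a * z"
    using ae aa by (metis mult.assoc)
  also have "a * z = z"
    using assms(1,3) by (simp add: E1_def omega_def omega_r_def)
  finally show ?thesis .
qed

lemma is_meet_zero:
  assumes "E1 z" and "E2 z c" and "e \<in> Idem" and "f \<in> Idem" and "omega f (c e)"
  shows "is_meet (Lclass e) (Lclass f) (Lclass z)"
proof -
  have zI: "z \<in> Idem"
    using assms(1) by (simp add: E1_def)
  have "omega_l h z" if "h \<in> Idem" "omega_l h e" "omega_l h f" for h
  proof -
    have "omega_l h (c e)"
      using that(3) assms(5) by (auto simp: omega_def intro: omega_l_trans)
    then have "h = z"
      using omega_l_complement_eq_zero assms(1-3) that(1,2) by blast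
    then show ?thesis
      using zI by (simp add: omega_l_refl)
  qed
  then show ?thesis
    unfolding is_meet_Lclass_iff[OF assms(3,4) zI]
    using assms(1,3,4) by (simp add: E1_omega_l_zero)
qed

lemma oplus_is_join:
  assumes "E2 z c" and "E3 c" and "e \<in> Idem" and "f \<in> Idem" and "omega f (c e)"
  shows "is_join (Lclass e) (Lclass f) (Lclass (oplus c e f))"
proof -
  have ceI: "c e \<in> Idem"
    using assms by (simp add: E2_complement_Idem)
  obtain k where k: "k \<in> Sset (c e) (c f) \<inter> Sset (c f) (c e)"
    using assms by (auto simp: E3_def)
  then have kI: "k \<in> Idem" and k_ce: "omega_r k (c e)" and k_cf: "omega_r k (c f)"
    by (auto simp: Sset_def Mset_def)
  have ckI: "c k \<in> Idem" and cck: "c (c k) = k"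
    using assms(1) kI by (simp_all add: E2_complement_Idem E2_complement_complement)
  have omega_l_ck_iff: "omega_l x (c k) \<longleftrightarrow> omega_r k (c x)" if "x \<in> Idem" for x
    using E2_omega_l_iff[OF assms(1) ckI that] cck by simp
  have "omega_l (c k) h" if "h \<in> Idem" "omega_l e h" "omega_l f h" for h
  proof -
    have "omega_r (c h) (c e)" and "omega_r (c h) (c f)"
      using that assms by (simp_all add: E2_omega_l_iff)
    then have "omega_r (c h) k"
      using Sset_omega_r_greatest k k_ce ceI that(1) assms(1)
      by (blast intro: E2_complement_Idem)
    then show ?thesis
      using E2_omega_l_iff[OF assms(1) that(1) ckI] cck by simp
  qed
  then have "is_join (Lclass e) (Lclass f) (Lclass (c k))"
    using assms(3,4) ckI k_ce k_cf by (simp add: is_join_Lclass_iff omega_l_ck_iff)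
  then show ?thesis
    using k by (simp add: oplus_eq)
qed

theorem proposition5p4:
  fixes z :: "'a::semigroup_mult" and c :: "'a \<Rightarrow> 'a" and e f :: 'a
  assumes "regular_semigroup TYPE('a)"
    and "E1 z" and "E2 z c" and "E3 c"
    and "e \<in> Idem" and "f \<in> Idem" and "omega f (c e)"
  shows "is_join (Lclass e) (Lclass f) (Lclass (oplus c e f))
       \<and> is_meet (Lclass e) (Lclass f) (Lclass z)
       \<and> Lclass z = {z}"
  using oplus_is_join[OF assms(3-7)] is_meet_zero[OF assms(2,3,5-7)] E1_Lclass_zero[OF assms(2)]
  by blast

end
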